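(* Let $G$ be a group with finite generating set $\mathcal G$, and suppose that the Cayley graph of $G$ with respect to $\mathcal G$ has property $L_\delta$ for some $\delta\ge 0$. Then $G$ is almost convex with respect to $\mathcal G$ with constant $3\delta+2$: for every integer $n\ge 0$ and every two vertices $g,g'$ of the Cayley graph with $d(1,g)=d(1,g')=n$ and $d(g,g')\le 2$, there is a path in the Cayley graph from $g$ to $g'$ of length at most $3\delta+2$ that lies entirely in the closed ball of radius $n$ about the identity vertex $1$.
   Context: The Cayley graph of $G$ with respect to $\mathcal G$ is regarded as a geodesic metric space in which each edge is isometric to the unit interval; points of this space may lie in the interiors of edges, and $d$ denotes the resulting path metric (extending the word metric on vertices). The closed ball of radius $n$ is the set of points at distance at most $n$ from the identity vertex. For $\delta\ge 0$, a finite sequence of points $(x_1,\dots,x_n)$ is a $\delta$-path if $d(x_1,x_2)+\dots+d(x_{n-1},x_n)\le d(x_1,x_n)+\delta$. The space has property $L_\delta$ if for every three distinct points $x,y,z$ there exists a point $t$ such that $(x,t,y)$, $(y,t,z)$ and $(z,t,x)$ are all $\delta$-paths. *)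

theory Defs
  imports Complex_Main "HOL-Algebra.Algebra"
begin

definition cay_vdist :: "('a, 'b) monoid_scheme \<Rightarrow> 'a set \<Rightarrow> 'a \<Rightarrow> 'a \<Rightarrow> real" where
  "cay_vdist G S g h = real (LEAST n. \<exists>ss. set ss \<subseteq> S \<union> (\<lambda>s. inv\<^bsub>G\<^esub> s) ` S \<and> length ss = n
      \<and> g \<otimes>\<^bsub>G\<^esub> foldr (\<lambda>s x. s \<otimes>\<^bsub>G\<^esub> x) ss \<one>\<^bsub>G\<^esub> = h)"

definition cay_edges :: "('a, 'b) monoid_scheme \<Rightarrow> 'a set \<Rightarrow> 'a set set" where
  "cay_edges G S = {{g, g \<otimes>\<^bsub>G\<^esub> s} | g s. g \<in> carrier G \<and> s \<in> S \<and> g \<otimes>\<^bsub>G\<^esub> s \<noteq> g}"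

text \<open>A point is encoded canonically by the partial map sending each vertex of the
  closed cell containing it (in its interior) to the distance from that vertex:
  a vertex g is [g \<mapsto> 0]; the point of edge {u,v} at distance t from u (0<t<1)
  is [u \<mapsto> t, v \<mapsto> 1-t].\<close>
definition cay_points :: "('a, 'b) monoid_scheme \<Rightarrow> 'a set \<Rightarrow> ('a \<Rightarrow> real option) set" where
  "cay_points G S =
     {[g \<mapsto> 0] | g. g \<in> carrier G}
   \<union> {[u \<mapsto> t, v \<mapsto> 1 - t] | u v t. {u, v} \<in> cay_edges G S \<and> u \<noteq> v \<and> 0 < t \<and> t < 1}"

abbreviation cay_vertex :: "'a \<Rightarrow> ('a \<Rightarrow> real option)" where
  "cay_vertex g \<equiv> [g \<mapsto> 0]"

text \<open>The path metric of the geometric realisation: either travel inside the common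
  cell, or leave through an endpoint a of p's cell, go along a geodesic of vertices to an
  endpoint b of q's cell, and enter q's cell.\<close>
definition cay_dist :: "('a, 'b) monoid_scheme \<Rightarrow> 'a set \<Rightarrow>
    ('a \<Rightarrow> real option) \<Rightarrow> ('a \<Rightarrow> real option) \<Rightarrow> real" where
  "cay_dist G S p q = Min
     ({\<bar>the (p a) - the (q a)\<bar> | a. dom p = dom q \<and> a \<in> dom p}
    \<union> {the (p a) + cay_vdist G S a b + the (q b) | a b. a \<in> dom p \<and> b \<in> dom q})"

definition delta_path3 :: "('a, 'b) monoid_scheme \<Rightarrow> 'a set \<Rightarrow> real \<Rightarrow>
    ('a \<Rightarrow> real option) \<Rightarrow> ('a \<Rightarrow> real option) \<Rightarrow> ('a \<Rightarrow> real option) \<Rightarrow> bool" where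
  "delta_path3 G S \<delta> x t y \<longleftrightarrow> cay_dist G S x t + cay_dist G S t y \<le> cay_dist G S x y + \<delta>"

definition property_L :: "('a, 'b) monoid_scheme \<Rightarrow> 'a set \<Rightarrow> real \<Rightarrow> bool" where
  "property_L G S \<delta> \<longleftrightarrow>
     (\<forall>x\<in>cay_points G S. \<forall>y\<in>cay_points G S. \<forall>z\<in>cay_points G S.
        x \<noteq> y \<and> y \<noteq> z \<and> x \<noteq> z \<longrightarrow>
        (\<exists>t\<in>cay_points G S. delta_path3 G S \<delta> x t y \<and> delta_path3 G S \<delta> y t z
                             \<and> delta_path3 G S \<delta> z t x))"

definition cay_ball :: "('a, 'b) monoid_scheme \<Rightarrow> 'a set \<Rightarrow> real \<Rightarrow> ('a \<Rightarrow> real option) set" where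
  "cay_ball G S r = {p \<in> cay_points G S. cay_dist G S (cay_vertex \<one>\<^bsub>G\<^esub>) p \<le> r}"

definition cay_edge_path :: "('a, 'b) monoid_scheme \<Rightarrow> 'a set \<Rightarrow> 'a list \<Rightarrow> bool" where
  "cay_edge_path G S vs \<longleftrightarrow> vs \<noteq> [] \<and> set vs \<subseteq> carrier G \<and>
     (\<forall>i. Suc i < length vs \<longrightarrow> {vs ! i, vs ! Suc i} \<in> cay_edges G S)"

definition cay_path_points :: "('a, 'b) monoid_scheme \<Rightarrow> 'a set \<Rightarrow> 'a list \<Rightarrow> ('a \<Rightarrow> real option) set" where
  "cay_path_points G S vs =
     {p \<in> cay_points G S. (\<exists>v \<in> set vs. dom p = {v})
        \<or> (\<exists>i. Suc i < length vs \<and> dom p = {vs ! i, vs ! Suc i})}"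

end

theory Submission
  imports Defs
begin

(* Join g and g' to 1 by geodesics y, y' and mark the points x, x' on them at distance m = \<delta>/2
   from g and g' (if n \<le> m, the path through 1 is already short enough).  Property L applied to
   1, x, x' gives a point t with d(1,t) + d(t,x) \<le> n + m, the same for x', and
   d(x,t) + d(t,x') \<le> d(x,x') + \<delta> \<le> 4m + 2.  Walk from g along y to the vertex where a
   shortest path from x to t leaves the cell of x, and then along that path to a vertex a of the
   cell of t: the first inequality keeps this walk in the ball of radius n, and its length is at
   most m + d(x,t) - d(a,t).  Doing the same from g' and closing the gap inside the cell of t
   gives a path of length at most 6m + 2 = 3\<delta> + 2. *)

locale cayley_graph = group G for G (structure) +
  fixes S :: "'a set"
  assumes gens_closed: "S \<subseteq> carrier G" and generates: "generate G S = carrier G"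
begin

definition sym_gens :: "'a set" where
  "sym_gens = S \<union> (\<lambda>s. inv s) ` S"

definition word_prod :: "'a list \<Rightarrow> 'a" where
  "word_prod ss = foldr (\<lambda>s x. s \<otimes> x) ss \<one>"

definition word_dist :: "'a \<Rightarrow> 'a \<Rightarrow> nat" where
  "word_dist g h = (LEAST n. \<exists>ss. set ss \<subseteq> sym_gens \<and> length ss = n \<and> g \<otimes> word_prod ss = h)"

lemma cay_vdist_eq_word_dist: "cay_vdist G S g h = real (word_dist g h)"
  unfolding cay_vdist_def word_dist_def sym_gens_def word_prod_def by simp

lemma sym_gens_closed: "sym_gens \<subseteq> carrier G"
  using gens_closed unfolding sym_gens_def by auto

lemma inv_sym_gens: "s \<in> sym_gens \<Longrightarrow> inv s \<in> sym_gens"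
  using gens_closed unfolding sym_gens_def by auto

lemma word_prod_Nil [simp]: "word_prod [] = \<one>"
  by (simp add: word_prod_def)

lemma word_prod_Cons [simp]: "word_prod (s # ss) = s \<otimes> word_prod ss"
  by (simp add: word_prod_def)

lemma word_prod_closed: "set ss \<subseteq> sym_gens \<Longrightarrow> word_prod ss \<in> carrier G"
  using sym_gens_closed by (induction ss) auto

lemma word_prod_append:
  "set xs \<subseteq> sym_gens \<Longrightarrow> set ys \<subseteq> sym_gens \<Longrightarrow> word_prod (xs @ ys) = word_prod xs \<otimes> word_prod ys"
proof (induction xs)
  case (Cons x xs)
  then have "x \<in> carrier G" using sym_gens_closed by auto
  with Cons show ?case using word_prod_closed by (simp add: m_assoc)
qed (simp add: word_prod_closed)

lemma word_prod_rev_inv: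
  "set ss \<subseteq> sym_gens \<Longrightarrow> word_prod (rev (map (\<lambda>s. inv s) ss)) = inv (word_prod ss)"
proof (induction ss)
  case (Cons s ss)
  have s: "s \<in> carrier G" and ss: "set ss \<subseteq> sym_gens" using Cons.prems sym_gens_closed by auto
  have "word_prod (rev (map (\<lambda>s. inv s) (s # ss))) = word_prod (rev (map (\<lambda>s. inv s) ss)) \<otimes> inv s"
    using word_prod_append[of "rev (map (\<lambda>s. inv s) ss)" "[inv s]"] Cons.prems inv_sym_gens s
    by auto
  also have "\<dots> = inv (s \<otimes> word_prod ss)"
    using Cons.IH ss s word_prod_closed by (simp add: inv_mult_group)
  finally show ?case by simp
qed simp

lemma generate_imp_word: "x \<in> generate G S \<Longrightarrow> \<exists>ss. set ss \<subseteq> sym_gens \<and> word_prod ss = x"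
proof (induction rule: generate.induct)
  case one
  show ?case by (intro exI[of _ "[]"]) simp
next
  case (incl h)
  then show ?case using gens_closed by (intro exI[of _ "[h]"]) (auto simp: sym_gens_def)
next
  case (inv h)
  then show ?case using gens_closed by (intro exI[of _ "[inv h]"]) (auto simp: sym_gens_def)
next
  case (eng h1 h2)
  then obtain s1 s2 where "set s1 \<subseteq> sym_gens" "word_prod s1 = h1" "set s2 \<subseteq> sym_gens" "word_prod s2 = h2"
    by blast
  then show ?case by (intro exI[of _ "s1 @ s2"]) (simp add: word_prod_append)
qed

lemma word_dist_witness:
  assumes "g \<in> carrier G" "h \<in> carrier G"
  obtains ss where "set ss \<subseteq> sym_gens" "length ss = word_dist g h" "g \<otimes> word_prod ss = h"
proof -
  have "inv g \<otimes> h \<in> generate G S" using generates assms by simp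
  then obtain ss where ss: "set ss \<subseteq> sym_gens" "word_prod ss = inv g \<otimes> h"
    using generate_imp_word by blast
  then have "g \<otimes> word_prod ss = h" using assms by (simp add: m_assoc[symmetric])
  then have "\<exists>n ss. set ss \<subseteq> sym_gens \<and> length ss = n \<and> g \<otimes> word_prod ss = h" using ss by blast
  from LeastI_ex[OF this] show thesis using that unfolding word_dist_def by blast
qed

lemma word_dist_le_length:
  "set ss \<subseteq> sym_gens \<Longrightarrow> g \<otimes> word_prod ss = h \<Longrightarrow> word_dist g h \<le> length ss"
  unfolding word_dist_def by (rule Least_le) blast

lemma word_dist_self [simp]: "g \<in> carrier G \<Longrightarrow> word_dist g g = 0"
  using word_dist_le_length[of "[]" g g] by simp

lemma word_dist_eq_0_iff:
  assumes "g \<in> carrier G" "h \<in> carrier G"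
  shows "word_dist g h = 0 \<longleftrightarrow> g = h"
proof
  assume "word_dist g h = 0"
  moreover obtain ss where "length ss = word_dist g h" "g \<otimes> word_prod ss = h"
    using word_dist_witness[OF assms] .
  ultimately show "g = h" using assms by simp
qed (use assms in simp)

lemma word_dist_sym:
  assumes "g \<in> carrier G" "h \<in> carrier G"
  shows "word_dist g h = word_dist h g"
proof -
  have "word_dist h g \<le> word_dist g h" if g: "g \<in> carrier G" and h: "h \<in> carrier G" for g h
  proof -
    obtain ss where ss: "set ss \<subseteq> sym_gens" "length ss = word_dist g h" "g \<otimes> word_prod ss = h"
      using word_dist_witness[OF g h] .
    have "h \<otimes> inv (word_prod ss) = g"
      using ss(3)[symmetric] word_prod_closed[OF ss(1)] g by (simp add: m_assoc)
    then have "h \<otimes> word_prod (rev (map (\<lambda>s. inv s) ss)) = g"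
      using word_prod_rev_inv[OF ss(1)] by simp
    moreover have "set (rev (map (\<lambda>s. inv s) ss)) \<subseteq> sym_gens" using ss(1) inv_sym_gens by auto
    ultimately show ?thesis using word_dist_le_length ss(2) by fastforce
  qed
  then show ?thesis using assms by (simp add: le_antisym)
qed

lemma word_dist_triangle:
  assumes "a \<in> carrier G" "b \<in> carrier G" "c \<in> carrier G"
  shows "word_dist a c \<le> word_dist a b + word_dist b c"
proof -
  obtain s1 where s1: "set s1 \<subseteq> sym_gens" "length s1 = word_dist a b" "a \<otimes> word_prod s1 = b"
    using word_dist_witness[OF assms(1,2)] .
  obtain s2 where s2: "set s2 \<subseteq> sym_gens" "length s2 = word_dist b c" "b \<otimes> word_prod s2 = c"
    using word_dist_witness[OF assms(2,3)] .
  have "a \<otimes> word_prod (s1 @ s2) = c"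
    using s1 s2 assms word_prod_closed by (simp add: word_prod_append m_assoc[symmetric])
  then show ?thesis using word_dist_le_length[of "s1 @ s2" a c] s1 s2 by simp
qed

lemma cay_edgesI: "g \<in> carrier G \<Longrightarrow> s \<in> S \<Longrightarrow> g \<otimes> s \<noteq> g \<Longrightarrow> {g, g \<otimes> s} \<in> cay_edges G S"
  unfolding cay_edges_def by blast

lemma cay_edge_iff:
  "{u, v} \<in> cay_edges G S \<longleftrightarrow> u \<in> carrier G \<and> v \<in> carrier G \<and> word_dist u v = 1"
proof
  assume "{u, v} \<in> cay_edges G S"
  then obtain g s where gs: "{u, v} = {g, g \<otimes> s}" "g \<in> carrier G" "s \<in> S" "g \<otimes> s \<noteq> g"
    unfolding cay_edges_def by blast
  have s: "s \<in> carrier G" "s \<in> sym_gens" using gs gens_closed unfolding sym_gens_def by auto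
  have gs_carrier: "g \<otimes> s \<in> carrier G" using gs(2) s(1) by simp
  have "word_dist g (g \<otimes> s) \<le> 1" using word_dist_le_length[of "[s]" g] s by simp
  moreover have "word_dist g (g \<otimes> s) \<noteq> 0" using word_dist_eq_0_iff[OF gs(2) gs_carrier] gs(4) by simp
  ultimately have "word_dist g (g \<otimes> s) = 1" by simp
  moreover have "word_dist (g \<otimes> s) g = word_dist g (g \<otimes> s)" using word_dist_sym[OF gs_carrier gs(2)] .
  ultimately show "u \<in> carrier G \<and> v \<in> carrier G \<and> word_dist u v = 1"
    using gs(1,2) gs_carrier unfolding doubleton_eq_iff by (elim disjE conjE) simp_all
next
  assume uv: "u \<in> carrier G \<and> v \<in> carrier G \<and> word_dist u v = 1"
  then have u: "u \<in> carrier G" and v: "v \<in> carrier G" by auto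
  obtain ss where ss: "set ss \<subseteq> sym_gens" "length ss = word_dist u v" "u \<otimes> word_prod ss = v"
    using word_dist_witness[OF u v] .
  then obtain s where "ss = [s]" using uv by (auto simp: length_Suc_conv)
  then have s: "s \<in> sym_gens" "u \<otimes> s = v"
    using ss sym_gens_closed by auto
  have "u \<noteq> v" using uv by auto
  from s(1) consider "s \<in> S" | s' where "s' \<in> S" "s = inv s'" unfolding sym_gens_def by auto
  then show "{u, v} \<in> cay_edges G S"
  proof cases
    case 1
    then show ?thesis using cay_edgesI[OF u 1] s \<open>u \<noteq> v\<close> by simp
  next
    case (2 s')
    then have s': "s' \<in> carrier G" using gens_closed by auto
    have "v \<otimes> s' = u \<otimes> inv s' \<otimes> s'" using s 2 by simp
    also have "\<dots> = u" using s' u by (simp add: m_assoc)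
    finally have "v \<otimes> s' = u" .
    then show ?thesis using cay_edgesI[OF v 2(1)] \<open>u \<noteq> v\<close> by (auto simp: insert_commute)
  qed
qed

lemma word_dist_along_walk:
  assumes "\<forall>i \<le> r. f i \<in> carrier G" and "\<forall>i < r. word_dist (f i) (f (Suc i)) \<le> 1"
    and "i \<le> j" and "j \<le> r"
  shows "word_dist (f i) (f j) \<le> j - i"
  using assms(3,4)
proof (induction j)
  case (Suc j)
  show ?case
  proof (cases "i = Suc j")
    case False
    then have "i \<le> j" using Suc.prems by simp
    have "word_dist (f i) (f (Suc j)) \<le> word_dist (f i) (f j) + word_dist (f j) (f (Suc j))"
      using word_dist_triangle assms(1) Suc.prems by simp
    moreover have "word_dist (f j) (f (Suc j)) \<le> 1" using assms(2) Suc.prems by simp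
    ultimately show ?thesis using Suc.IH \<open>i \<le> j\<close> Suc.prems by linarith
  qed (use assms(1) Suc.prems in simp)
qed (use assms(1) in simp)

lemma geodesic_exists:
  assumes u: "u \<in> carrier G" and v: "v \<in> carrier G"
  obtains f where "f 0 = u" "f (word_dist u v) = v" "\<forall>i \<le> word_dist u v. f i \<in> carrier G"
    "\<forall>i < word_dist u v. word_dist (f i) (f (Suc i)) = 1"
proof -
  let ?d = "word_dist u v"
  obtain ss where ss: "set ss \<subseteq> sym_gens" "length ss = ?d" "u \<otimes> word_prod ss = v"
    using word_dist_witness[OF u v] .
  define f where "f i = u \<otimes> word_prod (take i ss)" for i
  have take_ss: "set (take i ss) \<subseteq> sym_gens" for i
    using ss(1) by (meson order_trans set_take_subset)
  have f_carrier: "\<forall>i \<le> ?d. f i \<in> carrier G"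
    unfolding f_def using u word_prod_closed take_ss by auto
  have f_step: "word_dist (f i) (f (Suc i)) \<le> 1" if i: "i < ?d" for i
  proof -
    have s: "ss ! i \<in> sym_gens" using ss i by (metis nth_mem subsetD)
    have "take (Suc i) ss = take i ss @ [ss ! i]"
      using i ss(2) by (simp add: take_Suc_conv_app_nth)
    then have "f (Suc i) = f i \<otimes> word_prod [ss ! i]"
      unfolding f_def using word_prod_append[OF take_ss[of i], of "[ss ! i]"] s u
        word_prod_closed[OF take_ss[of i]] sym_gens_closed by (auto simp: m_assoc)
    then show ?thesis using word_dist_le_length[of "[ss ! i]"] s by simp
  qed
  have f_ends: "f 0 = u" "f ?d = v" unfolding f_def using u ss by simp_all
  have "word_dist (f i) (f (Suc i)) = 1" if i: "i < ?d" for i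
  proof (rule ccontr)
    assume "word_dist (f i) (f (Suc i)) \<noteq> 1"
    then have "word_dist (f i) (f (Suc i)) = 0" using f_step[OF i] by simp
    then have "f i = f (Suc i)" using word_dist_eq_0_iff f_carrier i by simp
    moreover have "word_dist u (f i) \<le> i" and "word_dist (f (Suc i)) v \<le> ?d - Suc i"
      using word_dist_along_walk[OF f_carrier, of 0 i] word_dist_along_walk[OF f_carrier, of "Suc i" ?d]
        f_step f_ends i by auto
    moreover have "?d \<le> word_dist u (f i) + word_dist (f i) v"
      using word_dist_triangle u v f_carrier i by simp
    ultimately show False using i by simp
  qed
  then show thesis using that f_ends f_carrier by blast
qed

lemma geodesic_to_identity:
  assumes g: "g \<in> carrier G" and n: "word_dist \<one> g = n"
  obtains y where "y 0 = g" "y n = \<one>" "\<forall>i \<le> n. y i \<in> carrier G \<and> word_dist \<one> (y i) = n - i"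
    "\<forall>i < n. word_dist (y i) (y (Suc i)) = 1"
proof -
  have gn: "word_dist g \<one> = n" using word_dist_sym[OF g one_closed] n by simp
  obtain y where y: "y 0 = g" "y n = \<one>" "\<forall>i \<le> n. y i \<in> carrier G"
    "\<forall>i < n. word_dist (y i) (y (Suc i)) = 1"
    using geodesic_exists[OF g one_closed] gn by metis
  have y_steps: "\<forall>i < n. word_dist (y i) (y (Suc i)) \<le> 1" using y(4) by simp
  have "word_dist \<one> (y i) = n - i" if i: "i \<le> n" for i
  proof -
    have yi: "y i \<in> carrier G" using y(3) i by simp
    have "word_dist (y i) (y n) \<le> n - i" "word_dist (y 0) (y i) \<le> i"
      using word_dist_along_walk[OF y(3) y_steps] i by (metis le0 diff_zero order_refl)+
    moreover have "word_dist g \<one> \<le> word_dist g (y i) + word_dist (y i) \<one>"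
      using word_dist_triangle g yi by simp
    moreover have "word_dist \<one> (y i) = word_dist (y i) \<one>" using word_dist_sym yi by simp
    ultimately show ?thesis using y gn by simp
  qed
  then show thesis using that y by blast
qed

lemma vertex_in_cay_points: "u \<in> carrier G \<Longrightarrow> [u \<mapsto> 0] \<in> cay_points G S"
  unfolding cay_points_def by blast

lemma identity_in_cay_points: "[\<one> \<mapsto> 0] \<in> cay_points G S"
  by (simp add: vertex_in_cay_points)

lemma cay_points_cases:
  assumes "p \<in> cay_points G S"
  obtains (vertex) u where "u \<in> carrier G" "p = [u \<mapsto> 0]"
  | (edge) u v s where "u \<in> carrier G" "v \<in> carrier G" "word_dist u v = 1" "0 < s" "s < 1"
      "p = [u \<mapsto> s, v \<mapsto> 1 - s]"
  using assms unfolding cay_points_def cay_edge_iff by blast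

lemma cay_point_dom:
  assumes "p \<in> cay_points G S"
  shows "dom p \<subseteq> carrier G" "finite (dom p)" "dom p \<noteq> {}"
  using assms by (cases rule: cay_points_cases; simp)+

lemma cay_point_nonneg: "p \<in> cay_points G S \<Longrightarrow> c \<in> dom p \<Longrightarrow> the (p c) \<ge> 0"
  by (cases rule: cay_points_cases) (auto split: if_splits)

lemma cay_point_vertex: "p \<in> cay_points G S \<Longrightarrow> dom p = {c} \<Longrightarrow> the (p c) = 0"
  by (cases rule: cay_points_cases) (auto simp: doubleton_eq_iff)

lemma cay_point_edge:
  assumes p: "p \<in> cay_points G S" and "c \<in> dom p" "c' \<in> dom p" "c \<noteq> c'"
  shows "dom p = {c, c'}" "word_dist c c' = 1" "the (p c) + the (p c') = 1" "the (p c) > 0"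
proof -
  have "dom p = {c, c'} \<and> word_dist c c' = 1 \<and> the (p c) + the (p c') = 1 \<and> the (p c) > 0"
    using p
  proof (cases rule: cay_points_cases)
    case (edge u v s)
    then have "word_dist v u = 1" using word_dist_sym by simp
    then show ?thesis using edge assms by (auto split: if_splits)
  qed (use assms in auto)
  then show "dom p = {c, c'}" "word_dist c c' = 1" "the (p c) + the (p c') = 1" "the (p c) > 0"
    by auto
qed

lemma word_dist_le_cay_point:
  assumes p: "p \<in> cay_points G S" and "c \<in> dom p" "c' \<in> dom p"
  shows "real (word_dist c c') \<le> the (p c) + the (p c')"
proof (cases "c = c'")
  case True
  have "c \<in> carrier G" using assms cay_point_dom(1)[OF p] by auto
  then show ?thesis using True assms cay_point_nonneg[OF p] by simp
qed (use cay_point_edge[OF assms] in simp)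

lemma cay_dist_candidates:
  assumes "p \<in> cay_points G S" "q \<in> cay_points G S"
  defines "C \<equiv> {\<bar>the (p a) - the (q a)\<bar> | a. dom p = dom q \<and> a \<in> dom p}
    \<union> {the (p a) + cay_vdist G S a b + the (q b) | a b. a \<in> dom p \<and> b \<in> dom q}"
  shows "cay_dist G S p q = Min C" "finite C" "C \<noteq> {}"
proof -
  show "cay_dist G S p q = Min C" unfolding C_def cay_dist_def ..
  have "C \<subseteq> (\<lambda>a. \<bar>the (p a) - the (q a)\<bar>) ` dom p
      \<union> (\<lambda>(a, b). the (p a) + cay_vdist G S a b + the (q b)) ` (dom p \<times> dom q)"
    unfolding C_def by auto
  then show "finite C" using cay_point_dom(2)[OF assms(1)] cay_point_dom(2)[OF assms(2)]
    by (meson finite_SigmaI finite_Un finite_imageI finite_subset)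
  show "C \<noteq> {}" using cay_point_dom(3)[OF assms(1)] cay_point_dom(3)[OF assms(2)]
    unfolding C_def by blast
qed

lemma cay_dist_le_via:
  assumes "p \<in> cay_points G S" "q \<in> cay_points G S" "a \<in> dom p" "b \<in> dom q"
  shows "cay_dist G S p q \<le> the (p a) + real (word_dist a b) + the (q b)"
  unfolding cay_dist_candidates(1)[OF assms(1,2)]
  by (rule Min_le[OF cay_dist_candidates(2)[OF assms(1,2)]])
    (use assms(3,4) in \<open>auto simp: cay_vdist_eq_word_dist\<close>)

lemma cay_dist_le_same_cell:
  assumes "p \<in> cay_points G S" "q \<in> cay_points G S" "dom p = dom q" "a \<in> dom p"
  shows "cay_dist G S p q \<le> \<bar>the (p a) - the (q a)\<bar>"
  unfolding cay_dist_candidates(1)[OF assms(1,2)]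
  by (rule Min_le[OF cay_dist_candidates(2)[OF assms(1,2)]]) (use assms(3,4) in blast)

lemma cay_dist_attained:
  assumes "p \<in> cay_points G S" "q \<in> cay_points G S"
  obtains (same_cell) a where "dom p = dom q" "a \<in> dom p"
      "cay_dist G S p q = \<bar>the (p a) - the (q a)\<bar>"
  | (via) a b where "a \<in> dom p" "b \<in> dom q"
      "cay_dist G S p q = the (p a) + real (word_dist a b) + the (q b)"
proof -
  have "cay_dist G S p q \<in> {\<bar>the (p a) - the (q a)\<bar> | a. dom p = dom q \<and> a \<in> dom p}
    \<union> {the (p a) + real (word_dist a b) + the (q b) | a b. a \<in> dom p \<and> b \<in> dom q}"
    using Min_in[OF cay_dist_candidates(2,3)[OF assms]]
    unfolding cay_dist_candidates(1)[OF assms] cay_vdist_eq_word_dist .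
  then show thesis using that by blast
qed

lemma word_dist_le_cay_dist:
  assumes p: "p \<in> cay_points G S" and q: "q \<in> cay_points G S" and a: "a \<in> dom p" and c: "c \<in> dom q"
  shows "real (word_dist a c) \<le> the (p a) + cay_dist G S p q + the (q c)"
  using p q
proof (cases rule: cay_dist_attained)
  case (same_cell e)
  show ?thesis
  proof (cases "a = c")
    case True
    have "a \<in> carrier G" using a cay_point_dom(1)[OF p] by auto
    then show ?thesis
      using True cay_point_nonneg[OF p a] cay_point_nonneg[OF q c] same_cell(3) by simp
  next
    case False
    have "c \<in> dom p" "a \<in> dom q" using a c same_cell(1) by simp_all
    then have "word_dist a c = 1" "the (p a) + the (p c) = 1" "dom p = {a, c}"
      "the (q a) + the (q c) = 1"
      using cay_point_edge[OF p a _ False] cay_point_edge[OF q _ c False] by auto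
    moreover have "e = a \<or> e = c" using same_cell(2) \<open>dom p = {a, c}\<close> by auto
    ultimately show ?thesis using same_cell(3) by auto
  qed
next
  case (via a' b')
  have "a \<in> carrier G" "a' \<in> carrier G" "b' \<in> carrier G" "c \<in> carrier G"
    using cay_point_dom(1)[OF p] cay_point_dom(1)[OF q] a c via by auto
  then have "word_dist a c \<le> word_dist a a' + word_dist a' b' + word_dist b' c"
    using word_dist_triangle by (meson add_mono_thms_linordered_semiring(3) le_trans)
  moreover have "real (word_dist a a') \<le> the (p a) + the (p a')"
    using word_dist_le_cay_point[OF p a via(1)] .
  moreover have "real (word_dist b' c) \<le> the (q b') + the (q c)"
    using word_dist_le_cay_point[OF q via(2) c] .
  ultimately show ?thesis using via(3) by linarith
qed

lemma cay_dist_nonneg: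
  assumes p: "p \<in> cay_points G S" and q: "q \<in> cay_points G S"
  shows "cay_dist G S p q \<ge> 0"
  using p q
proof (cases rule: cay_dist_attained)
  case (via a b)
  then show ?thesis using cay_point_nonneg[OF p] cay_point_nonneg[OF q] by fastforce
qed simp

lemma cay_dist_self: "p \<in> cay_points G S \<Longrightarrow> cay_dist G S p p = 0"
  using cay_dist_le_same_cell[of p p] cay_dist_nonneg[of p p] cay_point_dom(3)[of p]
  by fastforce

lemma cay_dist_sym:
  assumes "p \<in> cay_points G S" "q \<in> cay_points G S"
  shows "cay_dist G S p q = cay_dist G S q p"
proof -
  have "cay_dist G S q p \<le> cay_dist G S p q"
    if p: "p \<in> cay_points G S" and q: "q \<in> cay_points G S" for p q
    using p q
  proof (cases rule: cay_dist_attained)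
    case (same_cell e)
    then show ?thesis using cay_dist_le_same_cell[OF q p] by (simp add: abs_minus_commute)
  next
    case (via a b)
    have "word_dist b a = word_dist a b"
      using word_dist_sym cay_point_dom(1)[OF p] cay_point_dom(1)[OF q] via by blast
    then show ?thesis using cay_dist_le_via[OF q p via(2,1)] via(3) by simp
  qed
  then show ?thesis using assms by (simp add: order_antisym)
qed

(* The second clause puts the midpoint, hence every point, of each edge into the ball of radius n. *)
definition ball_walk :: "nat \<Rightarrow> (nat \<Rightarrow> 'a) \<Rightarrow> nat \<Rightarrow> bool" where
  "ball_walk n f L \<longleftrightarrow>
     (\<forall>i \<le> L. f i \<in> carrier G \<and> word_dist \<one> (f i) \<le> n) \<and>
     (\<forall>i < L. word_dist (f i) (f (Suc i)) = 1
        \<and> word_dist \<one> (f i) + word_dist \<one> (f (Suc i)) + 1 \<le> 2 * n)"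

lemma ball_walk_prefix: "ball_walk n f L \<Longrightarrow> j \<le> L \<Longrightarrow> ball_walk n f j"
  unfolding ball_walk_def by auto

lemma ball_walk_of_unit_steps:
  assumes carrier: "\<forall>i \<le> r. z i \<in> carrier G"
    and steps: "\<forall>i < r. word_dist (z i) (z (Suc i)) = 1"
    and ends: "word_dist \<one> (z 0) + word_dist \<one> (z r) + r \<le> 2 * n"
  shows "ball_walk n z r"
proof -
  have steps_le: "\<forall>i < r. word_dist (z i) (z (Suc i)) \<le> 1" using steps by simp
  have from_start: "word_dist \<one> (z i) \<le> word_dist \<one> (z 0) + i" if "i \<le> r" for i
    using word_dist_along_walk[OF carrier steps_le, of 0 i] word_dist_triangle[of \<one> "z 0" "z i"]
      carrier that by simp
  have to_end: "word_dist \<one> (z i) + i \<le> word_dist \<one> (z r) + r" if "i \<le> r" for i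
    using word_dist_along_walk[OF carrier steps_le, of i r] word_dist_triangle[of \<one> "z r" "z i"]
      word_dist_sym[of "z r" "z i"] carrier that by simp
  show ?thesis
    unfolding ball_walk_def
  proof (intro conjI allI impI)
    fix i assume "i \<le> r"
    then show "z i \<in> carrier G" "word_dist \<one> (z i) \<le> n"
      using carrier from_start to_end ends by (simp, fastforce)
  next
    fix i assume "i < r"
    then show "word_dist (z i) (z (Suc i)) = 1"
      and "word_dist \<one> (z i) + word_dist \<one> (z (Suc i)) + 1 \<le> 2 * n"
      using steps from_start[of i] to_end[of "Suc i"] ends by simp_all
  qed
qed

lemma ball_walk_geodesic_to_identity:
  assumes "\<forall>i \<le> n. y i \<in> carrier G \<and> word_dist \<one> (y i) = n - i"
    and "\<forall>i < n. word_dist (y i) (y (Suc i)) = 1"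
  shows "ball_walk n y n"
  using ball_walk_of_unit_steps[of n y n] assms by simp

lemma ball_walk_append:
  assumes P: "ball_walk n P l" and Q: "ball_walk n Q r" and "P l = Q 0"
  shows "ball_walk n (\<lambda>i. if i \<le> l then P i else Q (i - l)) (l + r)"
  unfolding ball_walk_def
proof (intro conjI allI impI)
  fix i assume "i \<le> l + r"
  then show "(if i \<le> l then P i else Q (i - l)) \<in> carrier G"
    and "word_dist \<one> (if i \<le> l then P i else Q (i - l)) \<le> n"
    using P Q unfolding ball_walk_def by auto
next
  fix i assume i: "i < l + r"
  let ?f = "\<lambda>i. if i \<le> l then P i else Q (i - l)"
  have "word_dist (?f i) (?f (Suc i)) = 1 \<and>
    word_dist \<one> (?f i) + word_dist \<one> (?f (Suc i)) + 1 \<le> 2 * n"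
  proof (cases "i < l")
    case True
    then show ?thesis using P unfolding ball_walk_def by auto
  next
    case False
    then have "i - l < r" "Suc i - l = Suc (i - l)" "?f i = Q (i - l)" using i assms(3) by auto
    then show ?thesis using Q False unfolding ball_walk_def by auto
  qed
  then show "word_dist (?f i) (?f (Suc i)) = 1"
    and "word_dist \<one> (?f i) + word_dist \<one> (?f (Suc i)) + 1 \<le> 2 * n" by simp_all
qed

lemma ball_walk_reverse:
  assumes Q: "ball_walk n Q r"
  shows "ball_walk n (\<lambda>i. Q (r - i)) r"
  unfolding ball_walk_def
proof (intro conjI allI impI)
  fix i assume "i \<le> r"
  then show "Q (r - i) \<in> carrier G" "word_dist \<one> (Q (r - i)) \<le> n"
    using Q unfolding ball_walk_def by auto
next
  fix i assume i: "i < r"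
  define j where "j = r - Suc i"
  have j: "j < r" "r - i = Suc j" "r - Suc i = j" using i unfolding j_def by auto
  have "Q j \<in> carrier G" "Q (Suc j) \<in> carrier G" using Q j unfolding ball_walk_def by auto
  then show "word_dist (Q (r - i)) (Q (r - Suc i)) = 1"
    and "word_dist \<one> (Q (r - i)) + word_dist \<one> (Q (r - Suc i)) + 1 \<le> 2 * n"
    using Q j word_dist_sym unfolding ball_walk_def by auto
qed

lemma ball_walk_join:
  assumes P: "ball_walk n P l" and Q: "ball_walk n Q l'" and meet: "P l = Q l'"
  obtains f where "ball_walk n f (l + l')" "f 0 = P 0" "f (l + l') = Q 0"
proof
  let ?f = "\<lambda>i. if i \<le> l then P i else Q (l' - (i - l))"
  show "ball_walk n ?f (l + l')"
    using ball_walk_append[OF P ball_walk_reverse[OF Q]] meet by simp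
  show "?f 0 = P 0" by simp
  show "?f (l + l') = Q 0" using meet by (cases "l' = 0") simp_all
qed

lemma ball_walk_snoc:
  assumes P: "ball_walk n P l" and a': "a' \<in> carrier G" and step: "word_dist (P l) a' = 1"
    and mid: "word_dist \<one> (P l) + word_dist \<one> a' + 1 \<le> 2 * n"
  shows "ball_walk n (P(Suc l := a')) (Suc l)"
proof -
  have Pl: "P l \<in> carrier G" using P unfolding ball_walk_def by simp
  have "word_dist \<one> a' \<le> word_dist \<one> (P l) + word_dist (P l) a'"
    using word_dist_triangle Pl a' by simp
  then have "word_dist \<one> a' \<le> n" using step mid by simp
  then show ?thesis using P a' step mid unfolding ball_walk_def by (auto simp: le_Suc_eq less_Suc_eq)
qed

lemma cay_edge_path_of_ball_walk:
  assumes "ball_walk n f L"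
  shows "cay_edge_path G S (map f [0..<Suc L])"
  unfolding cay_edge_path_def
proof (intro conjI allI impI)
  show "map f [0..<Suc L] \<noteq> []" by simp
  show "set (map f [0..<Suc L]) \<subseteq> carrier G" using assms unfolding ball_walk_def by auto
  fix i assume "Suc i < length (map f [0..<Suc L])"
  then have "i < L" by simp
  then show "{map f [0..<Suc L] ! i, map f [0..<Suc L] ! Suc i} \<in> cay_edges G S"
    using assms unfolding ball_walk_def cay_edge_iff by (simp del: upt_Suc add: nth_map_upt)
qed

lemma cay_path_points_of_ball_walk:
  assumes walk: "ball_walk n f L"
  shows "cay_path_points G S (map f [0..<Suc L]) \<subseteq> cay_ball G S (real n)"
proof
  let ?vs = "map f [0..<Suc L]"
  fix p assume "p \<in> cay_path_points G S ?vs"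
  then have p: "p \<in> cay_points G S" and
    "(\<exists>i \<le> L. dom p = {f i}) \<or> (\<exists>i < L. dom p = {f i, f (Suc i)})"
    unfolding cay_path_points_def
    by (auto simp del: upt_Suc simp: nth_map_upt) (metis less_Suc_eq_le)
  then have "cay_dist G S [\<one> \<mapsto> 0] p \<le> real n"
  proof (elim disjE exE conjE)
    fix i assume i: "i \<le> L" "dom p = {f i}"
    have "cay_dist G S [\<one> \<mapsto> 0] p \<le> real (word_dist \<one> (f i)) + the (p (f i))"
      using cay_dist_le_via[OF identity_in_cay_points p, of \<one> "f i"] i by simp
    then show ?thesis using cay_point_vertex[OF p i(2)] walk i unfolding ball_walk_def by auto
  next
    fix i assume i: "i < L" "dom p = {f i, f (Suc i)}"
    have w: "word_dist (f i) (f (Suc i)) = 1"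
      "word_dist \<one> (f i) + word_dist \<one> (f (Suc i)) + 1 \<le> 2 * n" "f i \<in> carrier G"
      using walk i unfolding ball_walk_def by auto
    then have "f i \<noteq> f (Suc i)" by auto
    then have "the (p (f i)) + the (p (f (Suc i))) = 1" using cay_point_edge(3)[OF p] i by simp
    moreover have "cay_dist G S [\<one> \<mapsto> 0] p \<le> real (word_dist \<one> (f i)) + the (p (f i))"
      "cay_dist G S [\<one> \<mapsto> 0] p \<le> real (word_dist \<one> (f (Suc i))) + the (p (f (Suc i)))"
      using cay_dist_le_via[OF identity_in_cay_points p, of \<one>] i by simp_all
    moreover have "real (word_dist \<one> (f i)) + real (word_dist \<one> (f (Suc i))) + 1 \<le> 2 * real n"
      using w(2) by linarith
    ultimately show ?thesis by linarith
  qed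
  then show "p \<in> cay_ball G S (real n)" unfolding cay_ball_def using p by simp
qed

lemma cell_edge_within_ball:
  assumes t: "t \<in> cay_points G S" and a: "a \<in> dom t" and a': "a' \<in> dom t" and "a \<noteq> a'"
    and "word_dist \<one> a \<le> n" "word_dist \<one> a' \<le> n"
    and close: "real (word_dist \<one> a) + the (t a) + cay_dist G S [\<one> \<mapsto> 0] t \<le> 2 * real n"
  shows "word_dist \<one> a + word_dist \<one> a' + 1 \<le> 2 * n"
proof (rule ccontr)
  assume "\<not> ?thesis"
  then have far: "word_dist \<one> a = n" "word_dist \<one> a' = n" using assms by auto
  have dom_t: "dom t = {a, a'}" using cay_point_edge(1)[OF t a a'] assms by simp
  have pos: "the (t a) > 0" "the (t a') > 0" using cay_point_edge(4)[OF t] a a' assms by auto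
  have "cay_dist G S [\<one> \<mapsto> 0] t > real n"
    using identity_in_cay_points t
  proof (cases rule: cay_dist_attained)
    case (same_cell e)
    then show ?thesis using dom_t \<open>a \<noteq> a'\<close> by (auto simp: doubleton_eq_iff)
  next
    case (via e c)
    then have "c = a \<or> c = a'" "e = \<one>" using dom_t by auto
    then show ?thesis using via(3) far pos by auto
  qed
  then show False using close far pos by simp
qed

end

locale marked_geodesic = cayley_graph G S for G (structure) and S +
  fixes n :: nat and g :: 'a and y :: "nat \<Rightarrow> 'a" and m :: real
  assumes start: "y 0 = g"
    and geodesic: "\<forall>i \<le> n. y i \<in> carrier G \<and> word_dist \<one> (y i) = n - i"
    and steps: "\<forall>i < n. word_dist (y i) (y (Suc i)) = 1"
    and m_nonneg: "0 \<le> m" and m_less: "m < real n"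
begin

definition k :: nat where
  "k = nat \<lfloor>m\<rfloor>"

(* The point of the geodesic y at distance m from g. *)
definition mark :: "'a \<Rightarrow> real option" where
  "mark = (if real k = m then [y k \<mapsto> 0] else [y k \<mapsto> m - real k, y (Suc k) \<mapsto> real k + 1 - m])"

lemma k_bounds: "real k \<le> m" "m < real k + 1" "k < n"
proof -
  show "real k \<le> m" "m < real k + 1" unfolding k_def using m_nonneg by linarith+
  then show "k < n" using m_less by linarith
qed

lemma y_ne_Suc: "i < n \<Longrightarrow> y i \<noteq> y (Suc i)"
  using steps geodesic by fastforce

lemma ball_walk_y: "j \<le> n \<Longrightarrow> ball_walk n y j"
  using ball_walk_prefix[OF ball_walk_geodesic_to_identity] geodesic steps by blast

lemma mark_floor: "y k \<in> dom mark" "the (mark (y k)) = m - real k"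
  using y_ne_Suc[of k] k_bounds unfolding mark_def by auto

lemma mark_anchor:
  assumes "c \<in> dom mark"
  obtains j where "j \<le> n" "c = y j" "the (mark c) = \<bar>m - real j\<bar>"
proof (cases "real k = m")
  case True
  show thesis
    by (rule that[of k]) (use True assms k_bounds in \<open>auto simp: mark_def\<close>)
next
  case False
  have Suc_k: "Suc k \<le> n" using k_bounds False by linarith
  then have ne: "y (Suc k) \<noteq> y k" using y_ne_Suc[of k] by auto
  have "c = y k \<or> c = y (Suc k)" using assms False unfolding mark_def by (auto split: if_splits)
  then show thesis
  proof
    assume "c = y k"
    then show thesis using that[of k] False ne k_bounds unfolding mark_def by auto
  next
    assume "c = y (Suc k)"
    then show thesis using that[of "Suc k"] Suc_k False ne k_bounds unfolding mark_def by auto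
  qed
qed

lemma mark_in_points: "mark \<in> cay_points G S"
proof (cases "real k = m")
  case True
  then show ?thesis unfolding mark_def using vertex_in_cay_points geodesic k_bounds by simp
next
  case False
  then have "Suc k \<le> n" using k_bounds by linarith
  then have "{y k, y (Suc k)} \<in> cay_edges G S" "y k \<noteq> y (Suc k)"
    using cay_edge_iff geodesic steps y_ne_Suc by simp_all
  moreover have "0 < m - real k" "m - real k < 1" "1 - (m - real k) = real k + 1 - m"
    using k_bounds False by auto
  ultimately show ?thesis unfolding mark_def cay_points_def using False by force
qed

lemma mark_ne_identity: "mark \<noteq> [\<one> \<mapsto> 0]"
proof
  assume "mark = [\<one> \<mapsto> 0]"
  then have "y k = \<one>" using mark_floor(1) by (auto split: if_splits)
  moreover have "word_dist \<one> (y k) = n - k" using geodesic k_bounds by simp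
  ultimately show False using k_bounds by simp
qed

lemma dist_identity_mark: "cay_dist G S [\<one> \<mapsto> 0] mark \<le> real n - m"
proof (cases "real k = m")
  case True
  have "real (word_dist \<one> (y k)) = real n - real k" using geodesic k_bounds by simp
  then show ?thesis using cay_dist_le_via[OF identity_in_cay_points mark_in_points, of \<one> "y k"]
      mark_floor True by simp
next
  case False
  have "Suc k \<le> n" using k_bounds False by linarith
  then have "y (Suc k) \<in> dom mark" "the (mark (y (Suc k))) = real k + 1 - m"
    "real (word_dist \<one> (y (Suc k))) = real n - real k - 1"
    using False geodesic y_ne_Suc[of k] unfolding mark_def by auto
  then show ?thesis
    using cay_dist_le_via[OF identity_in_cay_points mark_in_points, of \<one> "y (Suc k)"] by simp
qed

lemma ball_walk_to_cell_of_mark: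
  assumes t: "t \<in> cay_points G S" and same: "dom t = dom mark" and e: "e \<in> dom mark"
    and dist: "cay_dist G S mark t = \<bar>the (mark e) - the (t e)\<bar>"
  shows "real k + the (t (y k)) \<le> m + cay_dist G S mark t"
    and "real (word_dist \<one> (y k)) + the (t (y k)) + cay_dist G S [\<one> \<mapsto> 0] t \<le> 2 * real n"
proof -
  have yk: "y k \<in> dom t" using mark_floor(1) same by simp
  have W1_yk: "real (word_dist \<one> (y k)) = real n - real k" using geodesic k_bounds by simp
  have "\<bar>the (mark e) - the (t e)\<bar> = \<bar>the (mark (y k)) - the (t (y k))\<bar>"
  proof (cases "e = y k")
    case False
    then have "the (mark (y k)) + the (mark e) = 1" "the (t (y k)) + the (t e) = 1"
      using cay_point_edge(3)[OF mark_in_points mark_floor(1) e] cay_point_edge(3)[OF t yk] e same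
      by auto
    then show ?thesis by (smt (verit))
  qed simp
  then show "real k + the (t (y k)) \<le> m + cay_dist G S mark t"
    using dist mark_floor(2) by simp
  show "real (word_dist \<one> (y k)) + the (t (y k)) + cay_dist G S [\<one> \<mapsto> 0] t \<le> 2 * real n"
  proof (cases "real k = m")
    case True
    then have "dom t = {y k}" using same unfolding mark_def by simp
    then have "the (t (y k)) = 0" using cay_point_vertex[OF t] by simp
    then show ?thesis using cay_dist_le_via[OF identity_in_cay_points t, of \<one> "y k"] yk W1_yk by simp
  next
    case False
    have Suc_k: "Suc k \<le> n" using k_bounds False by linarith
    then have "y (Suc k) \<in> dom t" "y (Suc k) \<noteq> y k"
      using same False y_ne_Suc[of k] unfolding mark_def by auto
    then have "the (t (y k)) + the (t (y (Suc k))) = 1"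
      using cay_point_edge(3)[OF t yk] by simp
    moreover have "real (word_dist \<one> (y (Suc k))) = real n - real k - 1"
      using geodesic Suc_k by simp
    ultimately show ?thesis
      using cay_dist_le_via[OF identity_in_cay_points t, of \<one> "y (Suc k)"] \<open>y (Suc k) \<in> dom t\<close> W1_yk
      by simp
  qed
qed

lemma ball_walk_to_cell_via:
  assumes t: "t \<in> cay_points G S"
    and centre: "cay_dist G S [\<one> \<mapsto> 0] t + cay_dist G S mark t \<le> real n + m"
    and b: "b \<in> dom mark" and a: "a \<in> dom t"
    and dist: "cay_dist G S mark t = the (mark b) + real (word_dist b a) + the (t a)"
  obtains P l where "ball_walk n P l" "P 0 = g" "P l = a"
    "real l + the (t a) \<le> m + cay_dist G S mark t"
    "real (word_dist \<one> a) + the (t a) + cay_dist G S [\<one> \<mapsto> 0] t \<le> 2 * real n"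
proof -
  obtain j where j: "j \<le> n" "b = y j" "the (mark b) = \<bar>m - real j\<bar>"
    using mark_anchor[OF b] .
  have b_carrier: "b \<in> carrier G" and W1_b: "real (word_dist \<one> b) = real n - real j"
    using geodesic j by auto
  have a_carrier: "a \<in> carrier G" using cay_point_dom(1)[OF t] a by auto
  define r where "r = word_dist b a"
  obtain z where z: "z 0 = b" "z r = a" "\<forall>i \<le> r. z i \<in> carrier G"
    "\<forall>i < r. word_dist (z i) (z (Suc i)) = 1"
    using geodesic_exists[OF b_carrier a_carrier] unfolding r_def by blast
  have "real (word_dist \<one> a) \<le> cay_dist G S [\<one> \<mapsto> 0] t + the (t a)"
    using word_dist_le_cay_dist[OF identity_in_cay_points t _ a] by simp
  then have "real (word_dist \<one> (z 0) + word_dist \<one> (z r) + r) \<le> real (2 * n)"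
    using z(1,2) W1_b centre dist j(3) abs_ge_self[of "m - real j"] unfolding r_def by simp
  then have "word_dist \<one> (z 0) + word_dist \<one> (z r) + r \<le> 2 * n"
    by (simp only: of_nat_le_iff)
  then have z_walk: "ball_walk n z r" using ball_walk_of_unit_steps z(3,4) by blast
  obtain P where P: "ball_walk n P (j + r)" "P 0 = g" "P (j + r) = a"
  proof
    let ?P = "\<lambda>i. if i \<le> j then y i else z (i - j)"
    show "ball_walk n ?P (j + r)" using ball_walk_append[OF ball_walk_y[OF j(1)] z_walk] z(1) j(2) by simp
    show "?P 0 = g" using start by simp
    show "?P (j + r) = a" using z j(2) by (cases "r = 0") simp_all
  qed
  moreover have "real (j + r) + the (t a) \<le> m + cay_dist G S mark t"
    using dist j(3) unfolding r_def by simp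
  moreover have "word_dist \<one> a \<le> word_dist \<one> b + r"
    using word_dist_triangle b_carrier a_carrier unfolding r_def by simp
  then have "real (word_dist \<one> a) + the (t a) + cay_dist G S [\<one> \<mapsto> 0] t \<le> 2 * real n"
    using W1_b centre dist j(3) abs_ge_self[of "m - real j"] unfolding r_def by simp
  ultimately show thesis using that by blast
qed

lemma ball_walk_to_cell:
  assumes t: "t \<in> cay_points G S"
    and centre: "cay_dist G S [\<one> \<mapsto> 0] t + cay_dist G S mark t \<le> real n + m"
  obtains a P l where "a \<in> dom t" "ball_walk n P l" "P 0 = g" "P l = a"
    "real l + the (t a) \<le> m + cay_dist G S mark t"
    "real (word_dist \<one> a) + the (t a) + cay_dist G S [\<one> \<mapsto> 0] t \<le> 2 * real n"
  using mark_in_points t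
proof (cases rule: cay_dist_attained)
  case (same_cell e)
  then have "y k \<in> dom t" using mark_floor(1) by simp
  moreover have "ball_walk n y k" using ball_walk_y k_bounds by simp
  ultimately show thesis
    using that[of "y k" y k] ball_walk_to_cell_of_mark[OF t same_cell(1)[symmetric] same_cell(2,3)] start
    by simp
next
  case (via b a)
  then show thesis using ball_walk_to_cell_via[OF t centre] that by metis
qed

end

locale marked_pair = cayley_graph G S +
  A: marked_geodesic G S n g y m + B: marked_geodesic G S n g' y' m
  for G (structure) and S n g y g' y' m +
  assumes close: "word_dist g g' \<le> 2"
begin

lemma dist_marks: "cay_dist G S A.mark B.mark \<le> 2 * m + 2"
proof -
  have same_k: "B.k = A.k" unfolding A.k_def B.k_def ..
  have k_le: "A.k \<le> n" using A.k_bounds by simp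
  have yk: "y A.k \<in> carrier G" "y' A.k \<in> carrier G" and g: "g \<in> carrier G" "g' \<in> carrier G"
    using A.geodesic B.geodesic A.start B.start k_le by auto
  have "word_dist g (y A.k) \<le> A.k" "word_dist g' (y' A.k) \<le> A.k"
    using word_dist_along_walk[of n y 0 A.k] word_dist_along_walk[of n y' 0 A.k]
      A.geodesic B.geodesic A.steps B.steps A.start B.start k_le by auto
  moreover have "word_dist (y A.k) (y' A.k) \<le> word_dist (y A.k) g + word_dist g g' + word_dist g' (y' A.k)"
    using word_dist_triangle[of "y A.k" g] word_dist_triangle[of g g'] yk g by fastforce
  moreover have "word_dist (y A.k) g = word_dist g (y A.k)" using word_dist_sym yk g by simp
  ultimately have "word_dist (y A.k) (y' A.k) \<le> 2 * A.k + 2" using close by simp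
  then have "cay_dist G S A.mark B.mark \<le> (m - real A.k) + (2 * real A.k + 2) + (m - real A.k)"
    using cay_dist_le_via[OF A.mark_in_points B.mark_in_points A.mark_floor(1), of "y' A.k"]
      A.mark_floor(2) B.mark_floor same_k by simp
  then show ?thesis by simp
qed

lemma centre_exists:
  assumes "property_L G S (2 * m)"
  obtains t where "t \<in> cay_points G S"
    "cay_dist G S [\<one> \<mapsto> 0] t + cay_dist G S A.mark t \<le> real n + m"
    "cay_dist G S [\<one> \<mapsto> 0] t + cay_dist G S B.mark t \<le> real n + m"
    "cay_dist G S A.mark t + cay_dist G S B.mark t \<le> 4 * m + 2"
proof (cases "A.mark = B.mark")
  case True
  then show thesis
    using that[OF A.mark_in_points] cay_dist_self[OF A.mark_in_points] A.dist_identity_mark A.m_nonneg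
    by simp
next
  case False
  note points = identity_in_cay_points A.mark_in_points B.mark_in_points
  obtain t where t: "t \<in> cay_points G S"
    "delta_path3 G S (2 * m) [\<one> \<mapsto> 0] t A.mark" "delta_path3 G S (2 * m) A.mark t B.mark"
    "delta_path3 G S (2 * m) B.mark t [\<one> \<mapsto> 0]"
    using assms points False A.mark_ne_identity B.mark_ne_identity unfolding property_L_def by metis
  have "cay_dist G S t A.mark = cay_dist G S A.mark t" "cay_dist G S t B.mark = cay_dist G S B.mark t"
    "cay_dist G S t [\<one> \<mapsto> 0] = cay_dist G S [\<one> \<mapsto> 0] t"
    "cay_dist G S B.mark [\<one> \<mapsto> 0] = cay_dist G S [\<one> \<mapsto> 0] B.mark"
    using cay_dist_sym t(1) points by auto
  then show thesis
    using that[OF t(1)] t(2-4) A.dist_identity_mark B.dist_identity_mark dist_marks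
    unfolding delta_path3_def by simp
qed

lemma short_ball_walk:
  assumes "property_L G S (2 * m)"
  obtains f L where "ball_walk n f L" "f 0 = g" "f L = g'" "real L \<le> 6 * m + 2"
proof -
  obtain t where t: "t \<in> cay_points G S"
    "cay_dist G S [\<one> \<mapsto> 0] t + cay_dist G S A.mark t \<le> real n + m"
    "cay_dist G S [\<one> \<mapsto> 0] t + cay_dist G S B.mark t \<le> real n + m"
    "cay_dist G S A.mark t + cay_dist G S B.mark t \<le> 4 * m + 2"
    using centre_exists[OF assms] .
  obtain a P l where P: "a \<in> dom t" "ball_walk n P l" "P 0 = g" "P l = a"
    "real l + the (t a) \<le> m + cay_dist G S A.mark t"
    "real (word_dist \<one> a) + the (t a) + cay_dist G S [\<one> \<mapsto> 0] t \<le> 2 * real n"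
    using A.ball_walk_to_cell[OF t(1,2)] .
  obtain a' Q l' where Q: "a' \<in> dom t" "ball_walk n Q l'" "Q 0 = g'" "Q l' = a'"
    "real l' + the (t a') \<le> m + cay_dist G S B.mark t"
    using B.ball_walk_to_cell[OF t(1,3)] .
  have nonneg: "the (t a) \<ge> 0" "the (t a') \<ge> 0" using cay_point_nonneg[OF t(1)] P(1) Q(1) by auto
  show thesis
  proof (cases "a = a'")
    case True
    obtain f where "ball_walk n f (l + l')" "f 0 = g" "f (l + l') = g'"
      using ball_walk_join[OF P(2) Q(2)] P(3,4) Q(3,4) True by metis
    moreover have "real (l + l') \<le> 6 * m + 2" using P(5) Q(5) t(4) nonneg by simp
    ultimately show thesis using that by blast
  next
    case False
    have edge: "word_dist a a' = 1" "the (t a) + the (t a') = 1"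
      using cay_point_edge[OF t(1) P(1) Q(1) False] by simp_all
    have in_ball: "word_dist \<one> a \<le> n" "word_dist \<one> a' \<le> n"
      using P(2,4) Q(2,4) unfolding ball_walk_def by auto
    have walk: "ball_walk n (P(Suc l := a')) (Suc l)"
      using ball_walk_snoc[OF P(2)] cell_edge_within_ball[OF t(1) P(1) Q(1) False in_ball P(6)]
        cay_point_dom(1)[OF t(1)] Q(1) P(4) edge by auto
    have meet: "(P(Suc l := a')) (Suc l) = Q l'" using Q(4) by simp
    obtain f where "ball_walk n f (Suc l + l')" "f 0 = (P(Suc l := a')) 0" "f (Suc l + l') = Q 0"
      using ball_walk_join[OF walk Q(2) meet] .
    moreover have "real (Suc l + l') \<le> 6 * m + 2" using P(5) Q(5) t(4) edge by simp
    ultimately show thesis using that P(3) Q(3) by simp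
  qed
qed

end

context cayley_graph
begin

lemma almost_convex_ball_walk:
  assumes g: "g \<in> carrier G" and g': "g' \<in> carrier G"
    and n: "word_dist \<one> g = n" and n': "word_dist \<one> g' = n" and close: "word_dist g g' \<le> 2"
    and "\<delta> \<ge> 0" and L: "property_L G S \<delta>"
  obtains f L where "ball_walk n f L" "f 0 = g" "f L = g'" "real L \<le> 3 * \<delta> + 2"
proof -
  obtain y where y: "y 0 = g" "y n = \<one>" "\<forall>i \<le> n. y i \<in> carrier G \<and> word_dist \<one> (y i) = n - i"
    "\<forall>i < n. word_dist (y i) (y (Suc i)) = 1"
    using geodesic_to_identity[OF g n] .
  obtain y' where y': "y' 0 = g'" "y' n = \<one>" "\<forall>i \<le> n. y' i \<in> carrier G \<and> word_dist \<one> (y' i) = n - i"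
    "\<forall>i < n. word_dist (y' i) (y' (Suc i)) = 1"
    using geodesic_to_identity[OF g' n'] .
  show thesis
  proof (cases "real n \<le> \<delta> / 2")
    case True
    have "y n = y' n" using y(2) y'(2) by simp
    then obtain f where "ball_walk n f (n + n)" "f 0 = y 0" "f (n + n) = y' 0"
      using ball_walk_join ball_walk_geodesic_to_identity[OF y(3,4)] ball_walk_geodesic_to_identity[OF y'(3,4)]
      by blast
    then show thesis using that y(1) y'(1) True by simp
  next
    case False
    interpret marked_pair G S n g y g' y' "\<delta> / 2"
      using y y' close \<open>\<delta> \<ge> 0\<close> False by unfold_locales auto
    have "property_L G S (2 * (\<delta> / 2))" using L by simp
    then obtain f L where "ball_walk n f L" "f 0 = g" "f L = g'" "real L \<le> 6 * (\<delta> / 2) + 2"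
      by (rule short_ball_walk)
    then show thesis using that by simp
  qed
qed

end

theorem theorem2p1:
  fixes G (structure) and S :: "'a set" and \<delta> :: real
  assumes "group G" and "S \<subseteq> carrier G" and "finite S" and "generate G S = carrier G"
    and "\<delta> \<ge> 0" and "property_L G S \<delta>"
  shows "\<forall>(n::nat) g g'. g \<in> carrier G \<and> g' \<in> carrier G
           \<and> cay_vdist G S \<one> g = real n \<and> cay_vdist G S \<one> g' = real n
           \<and> cay_vdist G S g g' \<le> 2 \<longrightarrow>
           (\<exists>vs. cay_edge_path G S vs \<and> hd vs = g \<and> last vs = g'
              \<and> real (length vs - 1) \<le> 3 * \<delta> + 2
              \<and> cay_path_points G S vs \<subseteq> cay_ball G S (real n))"
proof (intro allI impI, elim conjE)
  interpret cayley_graph G S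
    using assms(1,2,4) by (simp add: cayley_graph_def cayley_graph_axioms_def)
  fix n :: nat and g g'
  assume g: "g \<in> carrier G" "g' \<in> carrier G" and dist: "cay_vdist G S \<one> g = real n"
    "cay_vdist G S \<one> g' = real n" "cay_vdist G S g g' \<le> 2"
  have "word_dist \<one> g = n" "word_dist \<one> g' = n" "word_dist g g' \<le> 2"
    using dist unfolding cay_vdist_eq_word_dist by simp_all
  then obtain f L where f: "ball_walk n f L" "f 0 = g" "f L = g'" "real L \<le> 3 * \<delta> + 2"
    using almost_convex_ball_walk[OF g] assms(5,6) by blast
  show "\<exists>vs. cay_edge_path G S vs \<and> hd vs = g \<and> last vs = g'
          \<and> real (length vs - 1) \<le> 3 * \<delta> + 2
          \<and> cay_path_points G S vs \<subseteq> cay_ball G S (real n)"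
  proof (intro exI conjI)
    let ?vs = "map f [0..<Suc L]"
    show "cay_edge_path G S ?vs" "cay_path_points G S ?vs \<subseteq> cay_ball G S (real n)"
      using cay_edge_path_of_ball_walk[OF f(1)] cay_path_points_of_ball_walk[OF f(1)] .
    show "hd ?vs = g" using f(2) by (simp del: upt_Suc add: upt_conv_Cons)
    show "last ?vs = g'" using f(3) by (simp add: last_map)
    show "real (length ?vs - 1) \<le> 3 * \<delta> + 2" using f(4) by simp
  qed
qed

end
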